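(* Let $M,N\ge0$ be integers and let $\phi\in\mathcal{D}_N^M$ satisfy $\#L_\phi\le p^N$, where $L_\phi=\{l\in\{0,1,\dots,p^{M+N}-1\}:\ \widehat\phi(l/p^M)\ne0\}$. Then for every $b\in\mathbb{Q}_p$ there exist complex numbers $\alpha_{a,b}$, $a\in I_p$, only finitely many of them nonzero, such that $$\phi(x-b)=\sum_{a\in I_p}\alpha_{a,b}\,\phi(x-a)\qquad\text{for all }x\in\mathbb{Q}_p .$$
   Context: $p$ is a prime, $\mathbb{Q}_p$ the field of $p$-adic numbers with norm $|\cdot|_p$. The fractional part of $x=p^{\gamma}\sum_{j\ge0}x_jp^j$ ($x_j\in\{0,\dots,p-1\}$, $x_0\ne0$) is $\{x\}_p=p^{\gamma}\sum_{j=0}^{-\gamma-1}x_jp^j$, $\{0\}_p=0$; $\chi_p(x)=e^{2\pi i\{x\}_p}$; $I_p=\{a\in\mathbb{Q}_p:\{a\}_p=a\}$; $B_\gamma(a)=\{x:|x-a|_p\le p^\gamma\}$. $dx$ is Haar measure with $B_0(0)$ of measure $1$; $\widehat f(\xi)=\int\chi_p(\xi x)f(x)\,dx$. A test function is a locally constant compactly supported complex function. $\mathcal{D}_N^M$ is the set of test functions $\phi$ that are $p^M$-periodic ($\phi(x+p^M)=\phi(x)$) and supported in $B_N(0)$; equivalently, locally constant $\phi$ with $\operatorname{supp}\phi\subset B_N(0)$, $\operatorname{supp}\widehat\phi\subset B_M(0)$. *)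

theory Defs
  imports Complex_Main "HOL-Computational_Algebra.Primes"
begin

text \<open>p-adic numbers, represented by their digit sequences:
  x = sum over j of x_j p^j, with digits x_j in {0..p-1}, indexed by integers j,
  and x_j = 0 for all sufficiently negative j.\<close>

type_synonym padic = "int \<Rightarrow> int"

definition Qp :: "nat \<Rightarrow> padic set" where
  "Qp p = {x. (\<forall>j. 0 \<le> x j \<and> x j < int p) \<and> (\<exists>k. \<forall>j<k. x j = 0)}"

definition trunc :: "nat \<Rightarrow> padic \<Rightarrow> int \<Rightarrow> real" where
  "trunc p x n = (\<Sum>j\<in>{j. j < n \<and> x j \<noteq> 0}. real_of_int (x j) * real p powi j)"

definition padd :: "nat \<Rightarrow> padic \<Rightarrow> padic \<Rightarrow> padic" where
  "padd p x y = (\<lambda>n. \<lfloor>(trunc p x (n+1) + trunc p y (n+1)) / real p powi n\<rfloor> mod int p)"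

definition psub :: "nat \<Rightarrow> padic \<Rightarrow> padic \<Rightarrow> padic" where
  "psub p x y = (\<lambda>n. \<lfloor>(trunc p x (n+1) - trunc p y (n+1) + real p powi (n+1))
                         / real p powi n\<rfloor> mod int p)"

definition lowbd :: "padic \<Rightarrow> nat" where
  "lowbd x = (LEAST k::nat. \<forall>j < - int k. x j = 0)"

definition pmult :: "nat \<Rightarrow> padic \<Rightarrow> padic \<Rightarrow> padic" where
  "pmult p x y = (\<lambda>n. let m = n + 1 + int (lowbd x) + int (lowbd y) in
       \<lfloor>trunc p x m * trunc p y m / real p powi n\<rfloor> mod int p)"

text \<open>The p-adic number l / p^M (l, M natural numbers).\<close>
definition pnum :: "nat \<Rightarrow> nat \<Rightarrow> nat \<Rightarrow> padic" where
  "pnum p l M = (\<lambda>j. if j + int M \<ge> 0 then (int l div int p ^ nat (j + int M)) mod int p else 0)"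

definition pzero :: padic where "pzero = (\<lambda>_. 0)"

definition pnorm :: "nat \<Rightarrow> padic \<Rightarrow> real" where
  "pnorm p x = (if (\<forall>j. x j = 0) then 0
                else real p powi (- (THE g. x g \<noteq> 0 \<and> (\<forall>j<g. x j = 0))))"

definition pball :: "nat \<Rightarrow> int \<Rightarrow> padic \<Rightarrow> padic set" where
  "pball p g a = {x \<in> Qp p. pnorm p (psub p x a) \<le> real p powi g}"

definition pfrac :: "nat \<Rightarrow> padic \<Rightarrow> real" where
  "pfrac p x = trunc p x 0"

definition pchi :: "nat \<Rightarrow> padic \<Rightarrow> complex" where
  "pchi p x = cis (2 * pi * pfrac p x)"

definition Ip :: "nat \<Rightarrow> padic set" where
  "Ip p = {a \<in> Qp p. \<forall>j\<ge>0. a j = 0}"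

text \<open>Haar integral of test functions: limit of Riemann sums over the cosets of
  B_{-K}(0) in B_K(0), each of measure p^{-K} (normalised so that B_0(0) has measure 1);
  for test functions the sequence is eventually constant.\<close>
definition reps :: "nat \<Rightarrow> nat \<Rightarrow> padic set" where
  "reps p K = {x \<in> Qp p. \<forall>j. (j < - int K \<or> j \<ge> int K) \<longrightarrow> x j = 0}"

definition pint :: "nat \<Rightarrow> (padic \<Rightarrow> complex) \<Rightarrow> complex" where
  "pint p f = lim (\<lambda>K::nat. (\<Sum>c\<in>reps p K. f c) * complex_of_real (real p powi (- int K)))"

definition fourier :: "nat \<Rightarrow> (padic \<Rightarrow> complex) \<Rightarrow> padic \<Rightarrow> complex" where
  "fourier p f \<xi> = pint p (\<lambda>x. pchi p (pmult p \<xi> x) * f x)"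

definition locally_constant :: "nat \<Rightarrow> (padic \<Rightarrow> complex) \<Rightarrow> bool" where
  "locally_constant p f = (\<forall>x\<in>Qp p. \<exists>g. \<forall>y\<in>pball p g x. f y = f x)"

definition test_function :: "nat \<Rightarrow> (padic \<Rightarrow> complex) \<Rightarrow> bool" where
  "test_function p f = (locally_constant p f \<and>
      (\<exists>N. \<forall>x\<in>Qp p. f x \<noteq> 0 \<longrightarrow> x \<in> pball p N pzero))"

definition DNM :: "nat \<Rightarrow> nat \<Rightarrow> nat \<Rightarrow> (padic \<Rightarrow> complex) set" where
  "DNM p N M = {f. test_function p f \<and>
      (\<forall>x\<in>Qp p. f (padd p x (pnum p (p ^ M) 0)) = f x) \<and>
      (\<forall>x\<in>Qp p. f x \<noteq> 0 \<longrightarrow> x \<in> pball p (int N) pzero)}"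

definition Lset :: "nat \<Rightarrow> nat \<Rightarrow> nat \<Rightarrow> (padic \<Rightarrow> complex) \<Rightarrow> nat set" where
  "Lset p N M f = {l \<in> {0..<p ^ (M + N)}. fourier p f (pnum p l M) \<noteq> 0}"

end

theory Submission
  imports Defs "HOL-Library.Real_Mod" "HOL-Computational_Algebra.Polynomial"
begin

text \<open>Write e(t) = exp(2 pi i t). A function \<open>\<phi>\<close> in D_N^M depends only on the truncation of
  its argument below p^M and vanishes unless the argument has no digits below p^-N. Hence
  \<open>\<phi>\<close>(x) = F(s) whenever x = s p^-N mod p^M, for a p^(M+N)-periodic function F on the integers,
  and the Fourier transform of \<open>\<phi>\<close> at l/p^M is p^-M times the discrete Fourier transform F^(l).
  The translate F(. - c) has transform F^(l) e(lc/p^(M+N)). As F^ is supported on at most p^N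
  frequencies l, whose roots of unity e(l/p^(M+N)) are pairwise distinct, Lagrange interpolation
  gives \<open>\<gamma>\<close>_0, ..., \<open>\<gamma>\<close>_(p^N - 1) with e(lc/p^(M+N)) = sum_j \<open>\<gamma>\<close>_j e(lj/p^(M+N)) on that support:
  every translate of F is a combination of p^N consecutive translates. One step of F is a shift
  of \<open>\<phi>\<close> by p^-N, the integer part of b is a multiple of p^N steps, and p^N consecutive points of
  {b} + p^-N Z can be placed inside [0,1), where they are fractional parts of elements of I_p.\<close>

lemma finite_nonzero_digits_below:
  "(\<forall>j<k. x j = 0) \<Longrightarrow> finite {j. j < n \<and> (x::int\<Rightarrow>int) j \<noteq> 0}"
  by (rule finite_subset[of _ "{k..<n}"]) (auto simp: not_less[symmetric])

lemma trunc_eq_0: "(\<forall>j<n. x j = 0) \<Longrightarrow> trunc p x n = 0"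
  unfolding trunc_def by simp

lemma trunc_add_one:
  assumes "\<forall>j<k. x j = 0"
  shows "trunc p x (n+1) = trunc p x n + real_of_int (x n) * real p powi n"
proof (cases "x n = 0")
  case True
  have "{j. j < n+1 \<and> x j \<noteq> 0} = {j. j < n \<and> x j \<noteq> 0}"
    using True by (auto, smt (verit))
  then show ?thesis using True by (simp add: trunc_def)
next
  case False
  have e: "{j. j < n+1 \<and> x j \<noteq> 0} = insert n {j. j < n \<and> x j \<noteq> 0}"
    using False by auto
  show ?thesis unfolding trunc_def e
    by (subst sum.insert) (auto intro: finite_nonzero_digits_below[OF assms])
qed

lemma Qp_digits_zero_below: "x \<in> Qp p \<Longrightarrow> \<exists>k. \<forall>j<k. x j = 0"
  by (simp add: Qp_def)

lemma Qp_digit_bounds: "x \<in> Qp p \<Longrightarrow> 0 \<le> x j \<and> x j < int p"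
  by (simp add: Qp_def)

lemma trunc_bounds:
  assumes p1: "1 < p" and x: "x \<in> Qp p"
  shows "0 \<le> trunc p x n \<and> trunc p x n < real p powi n"
proof -
  obtain k where k: "\<forall>j<k. x j = 0" using Qp_digits_zero_below[OF x] by blast
  show ?thesis
  proof (cases "n \<le> k")
    case True then show ?thesis using trunc_eq_0[of n x p] k p1 by auto
  next
    case False
    then have "k \<le> n" by simp
    then show ?thesis
    proof (induction n rule: int_ge_induct)
      case base then show ?case using trunc_eq_0[of k x p] k p1 by auto
    next
      case (step n)
      have d: "0 \<le> x n" "x n \<le> int p - 1" using Qp_digit_bounds[OF x, of n] by auto
      have pn: "0 < real p powi n" using p1 by simp
      have "real_of_int (x n) * real p powi n \<le> (real p - 1) * real p powi n"
        using d pn by (intro mult_right_mono) auto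
      moreover have "real p powi (n+1) = real p powi n * real p"
        using p1 by (simp add: power_int_add_1)
      ultimately show ?case using step trunc_add_one[OF k, of p n] d pn
        by (auto simp: algebra_simps)
    qed
  qed
qed

definition ppow_dvd :: "nat \<Rightarrow> int \<Rightarrow> real \<Rightarrow> bool" where
  "ppow_dvd p k r = (\<exists>i::int. r = of_int i * real p powi k)"

lemma ppow_dvd_add: "ppow_dvd p k a \<Longrightarrow> ppow_dvd p k b \<Longrightarrow> ppow_dvd p k (a + b)"
  unfolding ppow_dvd_def by (metis distrib_right of_int_add)

lemma ppow_dvd_diff: "ppow_dvd p k a \<Longrightarrow> ppow_dvd p k b \<Longrightarrow> ppow_dvd p k (a - b)"
  unfolding ppow_dvd_def by (metis left_diff_distrib of_int_diff)

lemma ppow_dvd_0: "ppow_dvd p k 0"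
  unfolding ppow_dvd_def by (rule exI[of _ 0]) simp

lemma ppow_dvd_int_mult: "ppow_dvd p k (of_int d * real p powi k)"
  unfolding ppow_dvd_def by blast

lemma ppow_dvd_mono:
  assumes p1: "1 < p" and "ppow_dvd p k a" "j \<le> k"
  shows "ppow_dvd p j a"
proof -
  obtain i where i: "a = of_int i * real p powi k" using assms unfolding ppow_dvd_def by blast
  have "real p powi k = real p powi j * real p powi (k - j)"
    using p1 by (simp flip: power_int_add)
  also have "real p powi (k - j) = of_int (int p ^ nat (k - j))"
    using assms(3) by (simp add: power_int_def)
  finally show ?thesis unfolding ppow_dvd_def using i
    by (intro exI[of _ "i * int p ^ nat (k - j)"]) (simp add: algebra_simps)
qed

lemma ppow_dvd_trunc_diff:
  assumes p1: "1 < p" and x: "x \<in> Qp p" and mn: "m \<le> n"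
  shows "ppow_dvd p m (trunc p x n - trunc p x m)"
  using mn
proof (induction n rule: int_ge_induct)
  case base then show ?case by (simp add: ppow_dvd_0)
next
  case (step n)
  obtain k where k: "\<forall>j<k. x j = 0" using Qp_digits_zero_below[OF x] by blast
  have "trunc p x (n+1) - trunc p x m = (trunc p x n - trunc p x m) + of_int (x n) * real p powi n"
    using trunc_add_one[OF k] by simp
  moreover have "ppow_dvd p m (of_int (x n) * real p powi n)"
    using ppow_dvd_mono[OF p1 ppow_dvd_int_mult step(1)] .
  ultimately show ?case using step ppow_dvd_add by metis
qed

lemma ppow_dvd_trunc_if_digits_zero_below:
  assumes p1: "1 < p" and x: "x \<in> Qp p" and k: "\<forall>j<k. x j = 0"
  shows "ppow_dvd p k (trunc p x n)"
proof (cases "n \<le> k")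
  case True then show ?thesis using trunc_eq_0[of n x p] k by (simp add: ppow_dvd_0)
next
  case False
  then have "k \<le> n" by simp
  then show ?thesis
  proof (induction n rule: int_ge_induct)
    case base then show ?case using trunc_eq_0[of k x p] k by (simp add: ppow_dvd_0)
  next
    case (step n)
    then show ?case
      using trunc_add_one[OF k, of p n] ppow_dvd_add ppow_dvd_mono[OF p1 ppow_dvd_int_mult step(1)]
      by metis
  qed
qed

lemma rmod_add_int_mult: "(x + of_int i * y) rmod y = x rmod y"
  by (metis add.right_neutral rmod_add rmod_rmod rmod_self_multiple_int)

lemma rmod_add_left_rmod: "(a rmod z + b) rmod z = (a + b) rmod z"
  by (metis rmod_add rmod_rmod)

lemma rmod_add_right_rmod: "(a + b rmod z) rmod z = (a + b) rmod z"
  by (metis rmod_add rmod_rmod)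

lemma rmod_eq_if_ppow_dvd_diff:
  assumes "ppow_dvd p k (a - b)"
  shows "a rmod (real p powi k) = b rmod (real p powi k)"
proof -
  obtain i where "a - b = of_int i * real p powi k" using assms unfolding ppow_dvd_def by blast
  then have "a = b + of_int i * real p powi k" by simp
  then show ?thesis by (simp add: rmod_add_int_mult)
qed

lemma rmod_eq_0_if_ppow_dvd: "ppow_dvd p k a \<Longrightarrow> a rmod (real p powi k) = 0"
  using rmod_eq_if_ppow_dvd_diff[of p k a 0] by simp

lemma rmod_ppow_eqI:
  assumes "0 \<le> b" "b < real p powi k" "ppow_dvd p k (a - b)"
  shows "a rmod (real p powi k) = b"
  using rmod_eq_if_ppow_dvd_diff[OF assms(3)] assms(1,2) by simp

lemma rmod_add_digit_eq_rmod_mult: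
  assumes m: "0 < m" and q: "0 < q"
  shows "A rmod m + of_int (\<lfloor>A/m\<rfloor> mod q) * m = A rmod (of_int q * m)"
proof -
  have r: "A rmod m = A - m * of_int \<lfloor>A/m\<rfloor>" using m by (simp add: rmod_def)
  have d: "\<lfloor>A/m\<rfloor> mod q = \<lfloor>A/m\<rfloor> - q * (\<lfloor>A/m\<rfloor> div q)"
    by (simp add: minus_div_mult_eq_mod[symmetric] algebra_simps)
  have "0 \<le> \<lfloor>A/m\<rfloor> mod q" "\<lfloor>A/m\<rfloor> mod q \<le> q - 1" using q by auto
  then have b1: "0 \<le> of_int (\<lfloor>A/m\<rfloor> mod q) * m" "of_int (\<lfloor>A/m\<rfloor> mod q) * m \<le> (of_int q - 1) * m"
    using m by (auto intro!: mult_right_mono)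
  have b2: "0 \<le> A rmod m" "A rmod m < m" using m by (auto simp: rmod_nonneg rmod_less)
  show ?thesis
  proof (rule sym, rule rmod_unique[where n = "\<lfloor>A/m\<rfloor> div q"])
    show "A rmod m + of_int (\<lfloor>A/m\<rfloor> mod q) * m \<in> {0..<\<bar>of_int q * m\<bar>}"
      using b1 b2 m q by (auto simp: algebra_simps)
    show "A = A rmod m + of_int (\<lfloor>A/m\<rfloor> mod q) * m + of_int (\<lfloor>A / m\<rfloor> div q) * (of_int q * m)"
      unfolding r d by (simp add: algebra_simps)
  qed
qed

lemma trunc_eq_rmod:
  assumes p1: "1 < p" and x: "x \<in> Qp p" and mn: "m \<le> n"
  shows "trunc p x m = trunc p x n rmod (real p powi m)"
  using rmod_ppow_eqI[OF _ _ ppow_dvd_trunc_diff[OF p1 x mn]] trunc_bounds[OF p1 x, of m] by simp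

lemma Qp_eqI_trunc:
  assumes x: "x \<in> Qp p" and y: "y \<in> Qp p" and p1: "1 < p"
    and e: "\<forall>n. trunc p x n = trunc p y n"
  shows "x = y"
proof
  fix n
  obtain k where k: "\<forall>j<k. x j = 0" using Qp_digits_zero_below[OF x] by blast
  obtain k' where k': "\<forall>j<k'. y j = 0" using Qp_digits_zero_below[OF y] by blast
  have "of_int (x n) * real p powi n = trunc p x (n+1) - trunc p x n"
    using trunc_add_one[OF k, of p n] by simp
  also have "\<dots> = of_int (y n) * real p powi n"
    using trunc_add_one[OF k', of p n] e by simp
  finally have "of_int (x n) * real p powi n = of_int (y n) * real p powi n" .
  then show "x n = y n" using p1 by auto
qed

section \<open>Arithmetic operations\<close>

text \<open>Each arithmetic operation of the definitions computes digit n as floor(W(n+1)/p^n) mod p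
  from real approximations W; when W is coherent the result is a p-adic number whose truncation
  below p^n is W n mod p^n.\<close>

locale coherent_digits =
  fixes p :: nat and z :: padic and W :: "int \<Rightarrow> real" and kk :: int
  assumes p1: "1 < p"
    and digit: "\<forall>n\<ge>kk. z n = \<lfloor>W (n+1) / real p powi n\<rfloor> mod int p"
    and zero_below: "\<forall>n<kk. z n = 0"
    and start: "\<forall>n\<le>kk. W n rmod real p powi n = 0"
    and coherent: "\<forall>n\<ge>kk. ppow_dvd p n (W (n+1) - W n)"
begin

lemma Qp: "z \<in> Qp p"
  unfolding Qp_def
proof safe
  fix j show "0 \<le> z j" "z j < int p" using digit zero_below p1
    by (cases "j < kk"; force)+
next
  show "\<exists>k. \<forall>j<k. z j = 0" using zero_below by blast
qed

lemma trunc: "trunc p z n = W n rmod real p powi n"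
proof (cases "n \<le> kk")
  case True then show ?thesis using trunc_eq_0[of n z p] zero_below start by simp
next
  case False
  then have "kk \<le> n" by simp
  then show ?thesis
  proof (induction n rule: int_ge_induct)
    case base then show ?case using trunc_eq_0[of kk z p] zero_below start by simp
  next
    case (step n)
    have pn: "0 < real p powi n" using p1 by simp
    have "trunc p z (n+1) = W n rmod real p powi n + of_int (z n) * real p powi n"
      using trunc_add_one[OF zero_below, of p n] step by simp
    also have "W n rmod real p powi n = W (n+1) rmod real p powi n"
      using rmod_eq_if_ppow_dvd_diff[OF coherent[rule_format, OF step(1)]] by simp
    also have "z n = \<lfloor>W (n+1) / real p powi n\<rfloor> mod int p" using digit step(1) by simp
    also have "W (n+1) rmod real p powi n
        + real_of_int (\<lfloor>W (n+1) / real p powi n\<rfloor> mod int p) * real p powi n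
        = W (n+1) rmod (of_int (int p) * real p powi n)"
      using rmod_add_digit_eq_rmod_mult[OF pn, of "int p" "W (n+1)"] p1 by simp
    also have "of_int (int p) * real p powi n = real p powi (n+1)"
      using p1 by (simp add: power_int_add_1')
    finally show ?case .
  qed
qed

end

lemma coherent_digits_padd:
  assumes p1: "1 < p" and x: "x \<in> Qp p" and y: "y \<in> Qp p"
  obtains k where "coherent_digits p (padd p x y) (\<lambda>n. trunc p x n + trunc p y n) k"
proof -
  obtain kx where kx: "\<forall>j<kx. x j = 0" using Qp_digits_zero_below[OF x] by blast
  obtain ky where ky: "\<forall>j<ky. y j = 0" using Qp_digits_zero_below[OF y] by blast
  have z: "trunc p x n = 0 \<and> trunc p y n = 0" if "n \<le> min kx ky" for n
    using kx ky that trunc_eq_0 by (metis min.bounded_iff order_less_le_trans)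
  have "ppow_dvd p n (trunc p x (n + 1) + trunc p y (n + 1) - (trunc p x n + trunc p y n))" for n
  proof -
    have "trunc p x (n + 1) + trunc p y (n + 1) - (trunc p x n + trunc p y n)
        = of_int (x n) * real p powi n + of_int (y n) * real p powi n"
      using trunc_add_one[OF kx, of p n] trunc_add_one[OF ky, of p n] by simp
    then show ?thesis by (simp add: ppow_dvd_add ppow_dvd_int_mult)
  qed
  then have "coherent_digits p (padd p x y) (\<lambda>n. trunc p x n + trunc p y n) (min kx ky)"
    using p1 z by unfold_locales (auto simp: padd_def)
  then show thesis by (rule that)
qed

lemma
  assumes "1 < p" "x \<in> Qp p" "y \<in> Qp p"
  shows padd_Qp: "padd p x y \<in> Qp p"
    and trunc_padd: "trunc p (padd p x y) n = (trunc p x n + trunc p y n) rmod real p powi n"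
  using coherent_digits_padd[OF assms] coherent_digits.Qp coherent_digits.trunc by metis+

lemma coherent_digits_psub:
  assumes p1: "1 < p" and x: "x \<in> Qp p" and y: "y \<in> Qp p"
  obtains k where
    "coherent_digits p (psub p x y) (\<lambda>n. trunc p x n - trunc p y n + real p powi n) k"
proof -
  obtain kx where kx: "\<forall>j<kx. x j = 0" using Qp_digits_zero_below[OF x] by blast
  obtain ky where ky: "\<forall>j<ky. y j = 0" using Qp_digits_zero_below[OF y] by blast
  have z: "trunc p x n = 0 \<and> trunc p y n = 0" if "n \<le> min kx ky" for n
    using kx ky that trunc_eq_0 by (metis min.bounded_iff order_less_le_trans)
  have pn: "real p powi (n+1) = real p * real p powi n" for n
    using p1 by (simp add: power_int_add_1')
  have low: "psub p x y n = 0" if "n < min kx ky" for n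
    using z[of "n+1"] that pn[of n] p1 by (simp add: psub_def)
  have "ppow_dvd p n (trunc p x (n + 1) - trunc p y (n + 1) + real p powi (n+1)
      - (trunc p x n - trunc p y n + real p powi n))" for n
  proof -
    have "trunc p x (n + 1) - trunc p y (n + 1) + real p powi (n+1)
        - (trunc p x n - trunc p y n + real p powi n) = of_int (x n - y n + int p - 1) * real p powi n"
      using trunc_add_one[OF kx, of p n] trunc_add_one[OF ky, of p n] pn[of n]
      by (simp add: algebra_simps)
    then show ?thesis by (simp only: ppow_dvd_int_mult)
  qed
  then have "coherent_digits p (psub p x y) (\<lambda>n. trunc p x n - trunc p y n + real p powi n)
      (min kx ky)"
    using p1 z low by unfold_locales (auto simp: psub_def)
  then show thesis by (rule that)
qed

lemma
  assumes "1 < p" "x \<in> Qp p" "y \<in> Qp p"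
  shows psub_Qp: "psub p x y \<in> Qp p"
    and trunc_psub: "trunc p (psub p x y) n = (trunc p x n - trunc p y n) rmod real p powi n"
proof -
  obtain k where
    cd: "coherent_digits p (psub p x y) (\<lambda>n. trunc p x n - trunc p y n + real p powi n) k"
    using coherent_digits_psub[OF assms] .
  show "psub p x y \<in> Qp p" using coherent_digits.Qp[OF cd] .
  show "trunc p (psub p x y) n = (trunc p x n - trunc p y n) rmod real p powi n"
    using coherent_digits.trunc[OF cd, of n] rmod_add_int_mult[of _ 1] by simp
qed

lemma coherent_digits_pnum:
  assumes p1: "1 < p"
  shows "coherent_digits p (pnum p v K) (\<lambda>_. real v / real p ^ K) (- int K)"
proof
  show "\<forall>n\<ge>- int K. pnum p v K n = \<lfloor>real v / real p ^ K / real p powi n\<rfloor> mod int p"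
  proof (intro allI impI)
    fix n assume n: "- int K \<le> n"
    have "real p ^ K * real p powi n = real p powi (n + int K)"
      using p1 by (simp add: power_int_add)
    also have "real p powi (n + int K) = real (p ^ nat (n + int K))"
      using n by (simp add: power_int_def)
    finally have "real v / real p ^ K / real p powi n = real v / real (p ^ nat (n + int K))"
      by simp
    then have "\<lfloor>real v / real p ^ K / real p powi n\<rfloor> = int (v div p ^ nat (n + int K))"
      by (simp only: floor_divide_of_nat_eq)
    then show "pnum p v K n = \<lfloor>real v / real p ^ K / real p powi n\<rfloor> mod int p"
      using n by (simp add: pnum_def zdiv_int of_nat_power)
  qed
  have "real v / real p ^ K = of_int (int v) * real p powi (- int K)"
    by (simp add: power_int_minus divide_inverse)
  then show "\<forall>n\<le>- int K. real v / real p ^ K rmod real p powi n = 0"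
    by (metis ppow_dvd_def ppow_dvd_mono[OF p1] rmod_eq_0_if_ppow_dvd)
qed (use p1 in \<open>auto simp: pnum_def ppow_dvd_0\<close>)

lemma
  assumes "1 < p"
  shows pnum_Qp: "pnum p v K \<in> Qp p"
    and trunc_pnum: "trunc p (pnum p v K) n = (real v / real p ^ K) rmod real p powi n"
  using coherent_digits.Qp coherent_digits.trunc coherent_digits_pnum[OF assms] by blast+

lemma digits_zero_below_lowbd:
  assumes x: "x \<in> Qp p"
  shows "\<forall>j < - int (lowbd x). x j = 0"
proof -
  obtain k where k: "\<forall>j<k. x j = 0" using Qp_digits_zero_below[OF x] by blast
  have "\<forall>j < - int (nat (-k)). x j = 0" using k by auto
  then show ?thesis unfolding lowbd_def by (rule LeastI)
qed

text \<open>At level m = n + lx + ly the product of truncations grows by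
  x_m p^m T_y(m+1) + T_x(m) y_m p^m, where T_x and T_y lie in p^-lx Z and p^-ly Z.\<close>

lemma ppow_dvd_trunc_product_step:
  assumes p1: "1 < p" and x: "x \<in> Qp p" and y: "y \<in> Qp p"
    and kx: "\<forall>j < - lx. x j = 0" and ky: "\<forall>j < - ly. y j = 0" and lxy: "0 \<le> lx" "0 \<le> ly"
    and m: "m = n + lx + ly"
  shows "ppow_dvd p n (trunc p x (m+1) * trunc p y (m+1) - trunc p x m * trunc p y m)"
proof -
  obtain i where i: "trunc p y (m+1) = of_int i * real p powi (- ly)"
    using ppow_dvd_trunc_if_digits_zero_below[OF p1 y ky] unfolding ppow_dvd_def by blast
  obtain i' where i': "trunc p x m = of_int i' * real p powi (- lx)"
    using ppow_dvd_trunc_if_digits_zero_below[OF p1 x kx] unfolding ppow_dvd_def by blast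
  have a1: "real p powi m * real p powi (- ly) = real p powi (n + lx)"
    using p1 by (simp add: m flip: power_int_add)
  have a2: "real p powi (- lx) * real p powi m = real p powi (n + ly)"
    using p1 by (simp add: m flip: power_int_add)
  have "trunc p x (m+1) * trunc p y (m+1) - trunc p x m * trunc p y m
      = of_int (x m) * real p powi m * trunc p y (m+1) + trunc p x m * (of_int (y m) * real p powi m)"
    unfolding trunc_add_one[OF kx, of p m] trunc_add_one[OF ky, of p m] by (simp add: algebra_simps)
  also have "\<dots> = of_int (x m * i) * (real p powi m * real p powi (- ly))
      + of_int (i' * y m) * (real p powi (- lx) * real p powi m)"
    unfolding i i' by (simp add: algebra_simps)
  also have "\<dots> = of_int (x m * i) * real p powi (n + lx) + of_int (i' * y m) * real p powi (n + ly)"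
    unfolding a1 a2 ..
  finally show ?thesis
    using ppow_dvd_mono[OF p1 ppow_dvd_int_mult[of p "n+lx" "x m * i"], of n]
      ppow_dvd_mono[OF p1 ppow_dvd_int_mult[of p "n+ly" "i' * y m"], of n] lxy
    by (simp add: ppow_dvd_add)
qed

lemma coherent_digits_pmult:
  assumes p1: "1 < p" and x: "x \<in> Qp p" and y: "y \<in> Qp p"
  defines "L \<equiv> int (lowbd x) + int (lowbd y)"
  shows "coherent_digits p (pmult p x y) (\<lambda>n. trunc p x (n + L) * trunc p y (n + L))
    (- int (lowbd x) - L)"
proof
  have kx: "\<forall>j < - int (lowbd x). x j = 0" using digits_zero_below_lowbd[OF x] .
  have ky: "\<forall>j < - int (lowbd y). y j = 0" using digits_zero_below_lowbd[OF y] .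
  have z: "trunc p x n = 0" if "n \<le> - int (lowbd x)" for n
    using kx that trunc_eq_0 by (metis order_less_le_trans)
  show "\<forall>n\<ge>- int (lowbd x) - L. pmult p x y n
      = \<lfloor>trunc p x (n + 1 + L) * trunc p y (n + 1 + L) / real p powi n\<rfloor> mod int p"
    by (simp add: pmult_def L_def Let_def algebra_simps)
  show "\<forall>n< - int (lowbd x) - L. pmult p x y n = 0"
    using z by (simp add: pmult_def Let_def L_def)
  show "\<forall>n\<le>- int (lowbd x) - L. trunc p x (n + L) * trunc p y (n + L) rmod real p powi n = 0"
    using z by (simp add: L_def)
  show "\<forall>n\<ge>- int (lowbd x) - L. ppow_dvd p n
      (trunc p x (n + 1 + L) * trunc p y (n + 1 + L) - trunc p x (n + L) * trunc p y (n + L))"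
    using ppow_dvd_trunc_product_step[OF p1 x y kx ky] by (simp add: L_def algebra_simps)
qed (rule p1)

lemma trunc_pmult:
  assumes "1 < p" "x \<in> Qp p" "y \<in> Qp p"
  shows "trunc p (pmult p x y) n = (trunc p x (n + int (lowbd x) + int (lowbd y))
      * trunc p y (n + int (lowbd x) + int (lowbd y))) rmod real p powi n"
  using coherent_digits.trunc[OF coherent_digits_pmult[OF assms], of n] by (simp add: add.assoc)

lemma pzero_Qp: "1 < p \<Longrightarrow> pzero \<in> Qp p"
  by (simp add: Qp_def pzero_def)

lemma trunc_pzero: "trunc p pzero n = 0"
  by (simp add: trunc_eq_0 pzero_def)

lemma psub_pzero:
  assumes p1: "1 < p" and x: "x \<in> Qp p"
  shows "psub p x pzero = x"
  by (rule Qp_eqI_trunc[OF psub_Qp[OF p1 x pzero_Qp[OF p1]] x p1])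
     (simp add: trunc_psub[OF p1 x pzero_Qp[OF p1]] trunc_pzero trunc_bounds[OF p1 x])

lemma digits_zero_below_if_trunc_eq_0:
  assumes p1: "1 < p" and z: "z \<in> Qp p" and T: "trunc p z n = 0"
  shows "\<forall>j<n. z j = 0"
proof (intro allI impI)
  fix j assume j: "j < n"
  obtain k where k: "\<forall>j<k. z j = 0" using Qp_digits_zero_below[OF z] by blast
  have "trunc p z (j+1) = 0" using trunc_eq_rmod[OF p1 z, of "j+1" n] j T by simp
  moreover have "trunc p z j = 0" using trunc_eq_rmod[OF p1 z, of "j" n] j T by simp
  ultimately show "z j = 0" using trunc_add_one[OF k, of p j] p1 by simp
qed

lemma least_nonzero_digit:
  fixes z :: padic
  assumes k: "\<forall>j<k. z j = 0" and j0: "z j0 \<noteq> 0"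
  obtains g where "z g \<noteq> 0" "\<forall>j<g. z j = 0"
proof
  define i where "i = (LEAST i::nat. z (k + int i) \<noteq> 0)"
  have "k \<le> j0" using k j0 by force
  then have "z (k + int (nat (j0 - k))) \<noteq> 0" using j0 by simp
  then show "z (k + int i) \<noteq> 0" unfolding i_def by (rule LeastI)
  show "\<forall>j<k + int i. z j = 0"
  proof (intro allI impI)
    fix j assume j: "j < k + int i"
    show "z j = 0"
    proof (cases "j < k")
      case False
      then have "nat (j - k) < i" using j by simp
      then have "\<not> z (k + int (nat (j - k))) \<noteq> 0" unfolding i_def by (rule not_less_Least)
      then show ?thesis using False by simp
    qed (use k in simp)
  qed
qed

lemma pnorm_eq_ppow_least_nonzero_digit:
  assumes "z g \<noteq> 0" "\<forall>j<g. z j = 0"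
  shows "pnorm p z = real p powi (- g)"
proof -
  have "(THE g. z g \<noteq> 0 \<and> (\<forall>j<g. z j = 0)) = g"
  proof (rule the_equality)
    fix g' assume "z g' \<noteq> 0 \<and> (\<forall>j<g'. z j = 0)"
    then show "g' = g" using assms by (metis linorder_neqE_linordered_idom)
  qed (use assms in simp)
  then show ?thesis using assms(1) by (auto simp: pnorm_def)
qed

lemma pnorm_le_ppow_iff:
  assumes p1: "1 < p" and z: "z \<in> Qp p"
  shows "pnorm p z \<le> real p powi g \<longleftrightarrow> (\<forall>j < - g. z j = 0)"
proof (cases "\<forall>j. z j = 0")
  case True then show ?thesis using p1 by (simp add: pnorm_def)
next
  case False
  obtain k where "\<forall>j<k. z j = 0" using Qp_digits_zero_below[OF z] by blast
  with False obtain g0 where g0: "z g0 \<noteq> 0" "\<forall>j<g0. z j = 0"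
    by (metis least_nonzero_digit)
  have "real p powi (- g0) \<le> real p powi g \<longleftrightarrow> - g0 \<le> g"
  proof
    show "- g0 \<le> g \<Longrightarrow> real p powi (- g0) \<le> real p powi g"
      using p1 by (intro power_int_increasing) auto
    show "real p powi (- g0) \<le> real p powi g \<Longrightarrow> - g0 \<le> g"
      using p1 power_int_strict_increasing[of g "- g0" "real p"] by (metis not_le of_nat_1 of_nat_less_iff)
  qed
  then have "pnorm p z \<le> real p powi g \<longleftrightarrow> - g0 \<le> g"
    by (simp add: pnorm_eq_ppow_least_nonzero_digit[OF g0])
  also have "\<dots> \<longleftrightarrow> (\<forall>j < - g. z j = 0)"
  proof
    show "- g0 \<le> g \<Longrightarrow> \<forall>j < - g. z j = 0" using g0(2) by auto
    show "\<forall>j < - g. z j = 0 \<Longrightarrow> - g0 \<le> g" using g0(1) by force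
  qed
  finally show ?thesis .
qed

lemma mem_pball_if_trunc_eq:
  assumes p1: "1 < p" and x: "x \<in> Qp p" and y: "y \<in> Qp p"
    and e: "trunc p x (- g) = trunc p y (- g)"
  shows "x \<in> pball p g y"
proof -
  have "trunc p (psub p x y) (- g) = 0" using trunc_psub[OF p1 x y] e by simp
  then have "\<forall>j < - g. psub p x y j = 0"
    using digits_zero_below_if_trunc_eq_0[OF p1 psub_Qp[OF p1 x y]] by blast
  then show ?thesis using x pnorm_le_ppow_iff[OF p1 psub_Qp[OF p1 x y]] by (simp add: pball_def)
qed

lemma DNM_digits_zero_below:
  assumes p1: "1 < p" and f: "f \<in> DNM p N M" and x: "x \<in> Qp p" and nz: "f x \<noteq> 0"
  shows "\<forall>j < - int N. x j = 0"
proof -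
  have "x \<in> pball p (int N) pzero" using f x nz by (simp add: DNM_def)
  then have "pnorm p x \<le> real p powi (int N)" by (simp add: pball_def psub_pzero[OF p1 x])
  then show ?thesis using pnorm_le_ppow_iff[OF p1 x] by blast
qed

section \<open>Functions in D_N^M\<close>

lemma trunc_padd_pnum:
  assumes p1: "1 < p" and x: "x \<in> Qp p"
  shows "trunc p (padd p x (pnum p v 0)) n = (trunc p x n + real v) rmod real p powi n"
  using trunc_padd[OF p1 x pnum_Qp[OF p1]] trunc_pnum[OF p1] by (simp add: rmod_add_right_rmod)

lemma padd_pnum_0:
  assumes p1: "1 < p" and x: "x \<in> Qp p"
  shows "padd p x (pnum p 0 0) = x"
  by (rule Qp_eqI_trunc[OF padd_Qp[OF p1 x pnum_Qp[OF p1]] x p1])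
     (simp add: trunc_padd_pnum[OF p1 x] trunc_bounds[OF p1 x])

lemma padd_pnum_add:
  assumes p1: "1 < p" and x: "x \<in> Qp p"
  shows "padd p (padd p x (pnum p u 0)) (pnum p v 0) = padd p x (pnum p (u + v) 0)"
proof -
  have xu: "padd p x (pnum p u 0) \<in> Qp p" by (rule padd_Qp[OF p1 x pnum_Qp[OF p1]])
  show ?thesis
    by (rule Qp_eqI_trunc[OF padd_Qp[OF p1 xu pnum_Qp[OF p1]] padd_Qp[OF p1 x pnum_Qp[OF p1]] p1])
       (simp add: trunc_padd_pnum[OF p1 x] trunc_padd_pnum[OF p1 xu] rmod_add_left_rmod add.assoc)
qed

lemma DNM_periodic_multiple:
  assumes p1: "1 < p" and f: "f \<in> DNM p N M" and x: "x \<in> Qp p"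
  shows "f (padd p x (pnum p (k * p ^ M) 0)) = f x"
proof (induction k)
  case 0 then show ?case using padd_pnum_0[OF p1 x] by simp
next
  case (Suc k)
  have "padd p x (pnum p (k * p ^ M) 0) \<in> Qp p" by (rule padd_Qp[OF p1 x pnum_Qp[OF p1]])
  then have "f (padd p (padd p x (pnum p (k * p ^ M) 0)) (pnum p (p ^ M) 0))
      = f (padd p x (pnum p (k * p ^ M) 0))"
    using f by (simp add: DNM_def)
  then show ?case using Suc padd_pnum_add[OF p1 x, of "k * p ^ M" "p ^ M"] by (simp add: add.commute)
qed

lemma trunc_eq_after_period_shift:
  assumes p1: "1 < p" and x: "x \<in> Qp p" and y: "y \<in> Qp p"
    and e: "trunc p x (int M) = trunc p y (int M)" and nM: "int M \<le> n"
  obtains k where "trunc p (padd p x (pnum p (k * p ^ M) 0)) n = trunc p y n"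
proof -
  obtain i1 where i1: "trunc p x n - trunc p x (int M) = of_int i1 * real p powi int M"
    using ppow_dvd_trunc_diff[OF p1 x nM] unfolding ppow_dvd_def by blast
  obtain i2 where i2: "trunc p y n - trunc p y (int M) = of_int i2 * real p powi int M"
    using ppow_dvd_trunc_diff[OF p1 y nM] unfolding ppow_dvd_def by blast
  define j where "j = i2 - i1"
  have ej: "trunc p y n - trunc p x n = of_int j * real p ^ M"
    using i1 i2 e by (simp add: j_def algebra_simps)
  define q where "q = int p ^ nat (n - int M)"
  have q0: "0 < q" using p1 by (simp add: q_def)
  define k where "k = nat (j mod q)"
  have "int k = j mod q" using q0 by (simp add: k_def)
  then have kj: "int k = j - q * (j div q)" by (metis minus_mult_div_eq_mod)
  have pq: "real p ^ M * of_int q = real p powi n"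
    using nM p1 by (simp add: q_def power_int_def flip: power_add)
  have "trunc p (padd p x (pnum p (k * p ^ M) 0)) n
      = (trunc p x n + real (k * p ^ M)) rmod real p powi n"
    by (rule trunc_padd_pnum[OF p1 x])
  also have "\<dots> = trunc p y n"
  proof (rule rmod_ppow_eqI)
    show "0 \<le> trunc p y n" "trunc p y n < real p powi n" using trunc_bounds[OF p1 y] by auto
    have "trunc p x n + real (k * p ^ M) - trunc p y n = of_int k * real p ^ M - of_int j * real p ^ M"
      using ej by simp
    also have "\<dots> = of_int (- (j div q)) * (real p ^ M * of_int q)"
      unfolding kj by (simp add: algebra_simps)
    finally show "ppow_dvd p n (trunc p x n + real (k * p ^ M) - trunc p y n)"
      unfolding ppow_dvd_def pq by blast
  qed
  finally show thesis by (rule that)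
qed

lemma DNM_eq_if_trunc_eq:
  assumes p1: "1 < p" and f: "f \<in> DNM p N M" and x: "x \<in> Qp p" and y: "y \<in> Qp p"
    and e: "trunc p x (int M) = trunc p y (int M)"
  shows "f x = f y"
proof -
  have "locally_constant p f" using f by (simp add: DNM_def test_function_def)
  then obtain g where g: "\<forall>z\<in>pball p g y. f z = f y"
    using y unfolding locally_constant_def by blast
  define n where "n = max (int M) (- g)"
  have nM: "int M \<le> n" "- g \<le> n" by (auto simp: n_def)
  obtain k where k: "trunc p (padd p x (pnum p (k * p ^ M) 0)) n = trunc p y n"
    using trunc_eq_after_period_shift[OF p1 x y e nM(1)] .
  define z where "z = padd p x (pnum p (k * p ^ M) 0)"
  have zQ: "z \<in> Qp p" unfolding z_def using padd_Qp[OF p1 x pnum_Qp[OF p1]] .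
  have "trunc p z (- g) = trunc p y (- g)"
    using k trunc_eq_rmod[OF p1 zQ nM(2)] trunc_eq_rmod[OF p1 y nM(2)] by (simp add: z_def)
  then have "z \<in> pball p g y" by (rule mem_pball_if_trunc_eq[OF p1 zQ y])
  then have "f z = f y" using g by blast
  moreover have "f z = f x" unfolding z_def by (rule DNM_periodic_multiple[OF p1 f x])
  ultimately show ?thesis by simp
qed

text \<open>A function f in D_N^M is encoded by the p^(M+N)-periodic function v \<mapsto> f(v/p^N) on the
  integers, and f z is read off from the truncation of z below p^M.\<close>

definition grid_profile :: "nat \<Rightarrow> nat \<Rightarrow> nat \<Rightarrow> (padic \<Rightarrow> complex) \<Rightarrow> int \<Rightarrow> complex" where
  "grid_profile p N M f v = f (pnum p (nat (v mod int (p ^ (M + N)))) N)"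

definition trunc_profile :: "nat \<Rightarrow> nat \<Rightarrow> nat \<Rightarrow> (padic \<Rightarrow> complex) \<Rightarrow> real \<Rightarrow> complex" where
  "trunc_profile p N M f r =
    (if ppow_dvd p (- int N) r then grid_profile p N M f \<lfloor>r * real p ^ N\<rfloor> else 0)"

lemma grid_profile_add_period:
  "grid_profile p N M f (v + c * int (p ^ (M + N))) = grid_profile p N M f v"
  by (simp add: grid_profile_def)

lemma trunc_profile_grid:
  assumes p1: "1 < p"
  shows "trunc_profile p N M f (of_int i * real p powi (- int N)) = grid_profile p N M f i"
proof -
  have "real p powi (- int N) * real p ^ N = 1" using p1 by (simp add: power_int_minus)
  then have "\<lfloor>of_int i * real p powi (- int N) * real p ^ N\<rfloor> = i" by (simp add: mult.assoc)
  then show ?thesis by (simp add: trunc_profile_def ppow_dvd_int_mult)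
qed

lemma trunc_profile_off_grid: "\<not> ppow_dvd p (- int N) r \<Longrightarrow> trunc_profile p N M f r = 0"
  by (simp add: trunc_profile_def)

lemma trunc_profile_periodic:
  assumes p1: "1 < p"
  shows "trunc_profile p N M f (r + of_int c * real p ^ M) = trunc_profile p N M f r"
proof (cases "ppow_dvd p (- int N) r")
  case True
  then obtain i where i: "r = of_int i * real p powi (- int N)" unfolding ppow_dvd_def by blast
  have "real p ^ M = of_int (int (p ^ (M + N))) * real p powi (- int N)"
    using p1 by (simp add: power_int_minus power_add)
  then have e: "r + of_int c * real p ^ M = of_int (i + c * int (p ^ (M + N))) * real p powi (- int N)"
    unfolding i by (simp add: algebra_simps)
  have "trunc_profile p N M f (r + of_int c * real p ^ M) = grid_profile p N M f (i + c * int (p ^ (M + N)))"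
    unfolding e by (rule trunc_profile_grid[OF p1])
  also have "\<dots> = trunc_profile p N M f r"
    unfolding grid_profile_add_period i by (rule trunc_profile_grid[OF p1, symmetric])
  finally show ?thesis .
next
  case False
  have "ppow_dvd p (- int N) (of_int c * real p ^ M)"
    using ppow_dvd_mono[OF p1 ppow_dvd_int_mult[of p "int M" c]] by simp
  then have "\<not> ppow_dvd p (- int N) (r + of_int c * real p ^ M)"
    using False ppow_dvd_diff by fastforce
  then show ?thesis using False by (simp add: trunc_profile_off_grid)
qed

lemma DNM_eq_trunc_profile:
  assumes p1: "1 < p" and f: "f \<in> DNM p N M" and z: "z \<in> Qp p"
  shows "f z = trunc_profile p N M f (trunc p z (int M))"
proof (cases "ppow_dvd p (- int N) (trunc p z (int M))")
  case False
  then have "f z = 0"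
    using DNM_digits_zero_below[OF p1 f z] ppow_dvd_trunc_if_digits_zero_below[OF p1 z] by blast
  then show ?thesis using False by (simp add: trunc_profile_off_grid)
next
  case True
  then obtain i where i: "trunc p z (int M) = of_int i * real p powi (- int N)"
    unfolding ppow_dvd_def by blast
  have pN: "real p powi (- int N) * real p ^ N = 1" using p1 by (simp add: power_int_minus)
  have b: "0 \<le> trunc p z (int M)" "trunc p z (int M) < real p ^ M"
    using trunc_bounds[OF p1 z, of "int M"] by auto
  have "0 < real p powi (- int N)" using p1 by simp
  then have i0: "0 \<le> i" using b(1) i by (simp add: zero_le_mult_iff)
  have "trunc p z (int M) * real p ^ N < real p ^ M * real p ^ N" using b p1 by simp
  then have "of_int i < real p ^ (M + N)" using i pN by (simp add: power_add mult.assoc)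
  then have i1: "i < int (p ^ (M+N))" by (metis of_int_less_iff of_int_of_nat_eq of_nat_power)
  have "real (nat i) / real p ^ N = trunc p z (int M)"
    using i i0 p1 by (simp add: power_int_minus divide_inverse)
  then have "trunc p (pnum p (nat i) N) (int M) = trunc p z (int M)"
    using trunc_pnum[OF p1, of "nat i" N "int M"] b by simp
  then have "f z = f (pnum p (nat i) N)"
    using DNM_eq_if_trunc_eq[OF p1 f z pnum_Qp[OF p1]] by simp
  then show ?thesis using i0 i1 by (simp add: i trunc_profile_grid[OF p1] grid_profile_def)
qed

lemma DNM_pnum:
  assumes p1: "1 < p" and f: "f \<in> DNM p N M"
  shows "f (pnum p v N) = grid_profile p N M f (int v)"
proof -
  have "f (pnum p v N) = trunc_profile p N M f (real v / real p ^ N rmod real p powi int M)"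
    using DNM_eq_trunc_profile[OF p1 f pnum_Qp[OF p1]] trunc_pnum[OF p1] by simp
  also have "real v / real p ^ N rmod real p powi int M
      = real v / real p ^ N + of_int (- \<lfloor>real v / real p ^ N / real p ^ M\<rfloor>) * real p ^ M"
    using p1 by (simp add: rmod_def)
  also have "trunc_profile p N M f \<dots> = trunc_profile p N M f (real v / real p ^ N)"
    by (rule trunc_profile_periodic[OF p1])
  also have "real v / real p ^ N = of_int (int v) * real p powi (- int N)"
    by (simp add: power_int_minus divide_inverse)
  also have "trunc_profile p N M f \<dots> = grid_profile p N M f (int v)"
    by (rule trunc_profile_grid[OF p1])
  finally show ?thesis .
qed

lemma DNM_psub:
  assumes p1: "1 < p" and f: "f \<in> DNM p N M" and x: "x \<in> Qp p" and y: "y \<in> Qp p"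
  shows "f (psub p x y) = trunc_profile p N M f (trunc p x (int M) - trunc p y (int M))"
proof -
  define d where "d = trunc p x (int M) - trunc p y (int M)"
  have "f (psub p x y) = trunc_profile p N M f (d rmod real p powi int M)"
    using DNM_eq_trunc_profile[OF p1 f psub_Qp[OF p1 x y]] trunc_psub[OF p1 x y] by (simp add: d_def)
  also have "d rmod real p powi int M = d + of_int (- \<lfloor>d / real p ^ M\<rfloor>) * real p ^ M"
    using p1 by (simp add: rmod_def)
  also have "trunc_profile p N M f \<dots> = trunc_profile p N M f d"
    by (rule trunc_profile_periodic[OF p1])
  finally show ?thesis by (simp add: d_def)
qed

section \<open>Discrete Fourier analysis on Z/nZ\<close>

definition cyclic_char :: "nat \<Rightarrow> int \<Rightarrow> complex" where
  "cyclic_char n x = cis (2 * pi * of_int x / real n)"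

lemma cyclic_char_add: "cyclic_char n (a + b) = cyclic_char n a * cyclic_char n b"
  unfolding cyclic_char_def by (simp add: cis_mult add_divide_distrib algebra_simps)

lemma cyclic_char_power: "cyclic_char n a ^ j = cyclic_char n (a * int j)"
  unfolding cyclic_char_def DeMoivre by (simp add: algebra_simps)

lemma cyclic_char_eq_1_iff:
  assumes n: "0 < n"
  shows "cyclic_char n d = 1 \<longleftrightarrow> int n dvd d"
proof
  assume "cyclic_char n d = 1"
  then obtain k where "2 * pi * of_int d / real n = of_int k * (2 * pi)"
    unfolding cyclic_char_def cis_eq_1_iff by blast
  then have "of_int d = real n * of_int k" using n by (simp add: field_simps)
  then have "d = int n * k" by (metis of_int_eq_iff of_int_mult of_int_of_nat_eq)
  then show "int n dvd d" by simp
next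
  assume "int n dvd d"
  then obtain c where "d = int n * c" by blast
  then have "2 * pi * of_int d / real n = of_int c * (2 * pi)" using n by simp
  then show "cyclic_char n d = 1" unfolding cyclic_char_def cis_eq_1_iff by blast
qed

lemma cyclic_char_periodic:
  assumes "0 < n"
  shows "cyclic_char n (a + int n * c) = cyclic_char n a"
  using cyclic_char_eq_1_iff[OF assms, of "int n * c"] by (simp add: cyclic_char_add)

lemma sum_cyclic_char:
  assumes n: "0 < n"
  shows "(\<Sum>l<n. cyclic_char n (int l * d)) = (if int n dvd d then of_nat n else 0)"
proof -
  have "(\<Sum>l<n. cyclic_char n (int l * d)) = (\<Sum>l<n. cyclic_char n d ^ l)"
    by (simp add: cyclic_char_power mult.commute)
  moreover have "cyclic_char n d ^ n = 1"
    using cyclic_char_eq_1_iff[OF n] by (simp add: cyclic_char_power)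
  ultimately show ?thesis
    using cyclic_char_eq_1_iff[OF n, of d] by (simp add: sum_gp_strict)
qed

lemma inj_on_cyclic_char:
  assumes n: "0 < n"
  shows "inj_on (\<lambda>l. cyclic_char n (int l)) {..<n}"
proof (rule inj_onI)
  fix a b assume a: "a \<in> {..<n}" and b: "b \<in> {..<n}"
    and e: "cyclic_char n (int a) = cyclic_char n (int b)"
  have "cyclic_char n (int a) = cyclic_char n (int a - int b) * cyclic_char n (int b)"
    by (simp flip: cyclic_char_add)
  moreover have "cyclic_char n (int b) \<noteq> 0" by (simp add: cyclic_char_def)
  ultimately have "cyclic_char n (int a - int b) = 1" using e by simp
  then have "int a mod int n = int b mod int n"
    using cyclic_char_eq_1_iff[OF n] by (simp add: mod_eq_dvd_iff)
  then show "a = b" using a b by simp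
qed

definition dft :: "nat \<Rightarrow> (int \<Rightarrow> complex) \<Rightarrow> nat \<Rightarrow> complex" where
  "dft n F l = (\<Sum>k<n. cyclic_char n (int l * int k) * F (int k))"

lemma dft_inversion:
  assumes n: "0 < n" and per: "\<forall>v. F v = F (v mod int n)"
  shows "F x = (\<Sum>l<n. dft n F l * cyclic_char n (- int l * x)) / of_nat n"
proof -
  have "(\<Sum>l<n. dft n F l * cyclic_char n (- int l * x))
      = (\<Sum>l<n. \<Sum>k<n. F (int k) * cyclic_char n (int l * (int k - x)))"
    unfolding dft_def sum_distrib_right
    by (intro sum.cong refl) (simp add: cyclic_char_add[symmetric] algebra_simps)
  also have "\<dots> = (\<Sum>k<n. F (int k) * (\<Sum>l<n. cyclic_char n (int l * (int k - x))))"
    by (subst sum.swap) (simp add: sum_distrib_left)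
  also have "\<dots> = (\<Sum>k<n. if k = nat (x mod int n) then F (int k) * of_nat n else 0)"
  proof (intro sum.cong refl)
    fix k assume k: "k \<in> {..<n}"
    have "int n dvd (int k - x) \<longleftrightarrow> int k mod int n = x mod int n"
      by (simp add: mod_eq_dvd_iff)
    also have "\<dots> \<longleftrightarrow> k = nat (x mod int n)" using k by auto
    finally show "F (int k) * (\<Sum>l<n. cyclic_char n (int l * (int k - x)))
        = (if k = nat (x mod int n) then F (int k) * of_nat n else 0)"
      using sum_cyclic_char[OF n, of "int k - x"] by simp
  qed
  also have "\<dots> = F (x mod int n) * of_nat n"
  proof -
    have "nat (x mod int n) \<in> {..<n}" using n by (simp add: nat_less_iff)
    then show ?thesis using n by (simp add: sum.delta)
  qed
  finally show ?thesis using per n by simp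
qed

lemma poly_eq_sum_below_degree_bound:
  fixes Q :: "'a::{comm_semiring_0,semiring_1} poly"
  assumes "degree Q < m"
  shows "poly Q x = (\<Sum>j<m. coeff Q j * x ^ j)"
proof -
  have "poly Q x = (\<Sum>j\<le>degree Q. coeff Q j * x ^ j)" by (rule poly_altdef)
  also have "\<dots> = (\<Sum>j<m. coeff Q j * x ^ j)"
    by (rule sum.mono_neutral_left) (use assms in \<open>auto intro: le_degree\<close>)
  finally show ?thesis .
qed

lemma lagrange_interpolation:
  fixes w t :: "'b \<Rightarrow> 'a::field"
  assumes fin: "finite S" and inj: "inj_on w S" and ne: "S \<noteq> {}"
  obtains Q where "degree Q < card S" "\<forall>s\<in>S. poly Q (w s) = t s"
proof
  define Q where
    "Q = (\<Sum>s\<in>S. smult (t s / (\<Prod>u\<in>S-{s}. (w s - w u))) (\<Prod>u\<in>S-{s}. [:- w u, 1:]))"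
  have "degree Q \<le> card S - 1" unfolding Q_def
  proof (rule degree_sum_le[OF fin])
    fix s assume s: "s \<in> S"
    have "degree (\<Prod>u\<in>S-{s}. [:- w u, 1:]) \<le> sum (degree \<circ> (\<lambda>u. [:- w u, 1:])) (S - {s})"
      by (rule degree_prod_sum_le) (use fin in simp)
    also have "\<dots> = card S - 1" using s fin by simp
    finally show "degree (smult (t s / (\<Prod>u\<in>S-{s}. (w s - w u))) (\<Prod>u\<in>S-{s}. [:- w u, 1:]))
        \<le> card S - 1"
      using degree_smult_le order_trans by blast
  qed
  moreover have "0 < card S" using ne fin by (simp add: card_gt_0_iff)
  ultimately show "degree Q < card S" by simp
  show "\<forall>s0\<in>S. poly Q (w s0) = t s0"
  proof
    fix s0 assume s0: "s0 \<in> S"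
    have "poly Q (w s0) = (\<Sum>s\<in>S. t s / (\<Prod>u\<in>S-{s}. (w s - w u)) * (\<Prod>u\<in>S-{s}. (w s0 - w u)))"
      unfolding Q_def poly_sum poly_smult poly_prod by simp
    also have "\<dots> = (\<Sum>s\<in>S. if s = s0 then t s0 else 0)"
    proof (intro sum.cong refl)
      fix s assume s: "s \<in> S"
      have "(\<Prod>u\<in>S-{s}. (w s - w u)) \<noteq> 0" using inj s fin by (auto simp: inj_on_def)
      moreover have "s \<noteq> s0 \<Longrightarrow> (\<Prod>u\<in>S-{s}. (w s0 - w u)) = 0"
        using s0 fin by (intro prod_zero) auto
      ultimately show "t s / (\<Prod>u\<in>S-{s}. (w s - w u)) * (\<Prod>u\<in>S-{s}. (w s0 - w u))
          = (if s = s0 then t s0 else 0)"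
        by auto
    qed
    also have "\<dots> = t s0" using s0 fin by simp
    finally show "poly Q (w s0) = t s0" .
  qed
qed

lemma interpolation_coeffs:
  fixes w t :: "'b \<Rightarrow> 'a::field"
  assumes fin: "finite S" and inj: "inj_on w S" and card: "card S \<le> m"
  obtains \<gamma> where "\<forall>s\<in>S. (\<Sum>j<m. \<gamma> j * w s ^ j) = t s"
proof (cases "S = {}")
  case False
  then obtain Q where "degree Q < card S" "\<forall>s\<in>S. poly Q (w s) = t s"
    using lagrange_interpolation[OF fin inj] by blast
  then show thesis
    using card poly_eq_sum_below_degree_bound[of Q m] by (intro that[of "coeff Q"]) auto
qed (use that in simp)

lemma sum_coeffs_shifted_cyclic_char:
  assumes "(\<Sum>j<m. \<gamma> j * cyclic_char n (int l) ^ j) = cyclic_char n (int l * (c + r))"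
  shows "(\<Sum>j<m. \<gamma> j * cyclic_char n (- int l * (s - int j + r)))
    = cyclic_char n (- int l * (s - c))"
proof -
  have "(\<Sum>j<m. \<gamma> j * cyclic_char n (- int l * (s - int j + r)))
      = cyclic_char n (- int l * (s + r)) * (\<Sum>j<m. \<gamma> j * cyclic_char n (int l) ^ j)"
    unfolding sum_distrib_left cyclic_char_power
  proof (intro sum.cong refl)
    fix j
    have "- int l * (s - int j + r) = - int l * (s + r) + int l * int j" by (simp add: algebra_simps)
    then have "cyclic_char n (- int l * (s - int j + r))
        = cyclic_char n (- int l * (s + r)) * cyclic_char n (int l * int j)"
      by (simp only: cyclic_char_add)
    then show "\<gamma> j * cyclic_char n (- int l * (s - int j + r))
        = cyclic_char n (- int l * (s + r)) * (\<gamma> j * cyclic_char n (int l * int j))"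
      by simp
  qed
  also have "\<dots> = cyclic_char n (- int l * (s + r) + int l * (c + r))"
    unfolding assms by (simp only: cyclic_char_add)
  also have "- int l * (s + r) + int l * (c + r) = - int l * (s - c)" by (simp add: algebra_simps)
  finally show ?thesis .
qed

lemma shift_in_span_of_shifts:
  assumes n: "0 < n" and per: "\<forall>v. F v = F (v mod int n)"
    and card: "card {l \<in> {0..<n}. dft n F l \<noteq> 0} \<le> m"
  obtains \<gamma> :: "nat \<Rightarrow> complex" where "\<forall>s. F (s - c) = (\<Sum>j<m. \<gamma> j * F (s - int j + r))"
proof -
  define S where "S = {l \<in> {0..<n}. dft n F l \<noteq> 0}"
  have "inj_on (\<lambda>l. cyclic_char n (int l)) S"
    using inj_on_cyclic_char[OF n] by (rule inj_on_subset) (auto simp: S_def)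
  then obtain \<gamma> where \<gamma>: "\<forall>l\<in>S. (\<Sum>j<m. \<gamma> j * cyclic_char n (int l) ^ j)
      = cyclic_char n (int l * (c + r))"
    using interpolation_coeffs[of S _ m "\<lambda>l. cyclic_char n (int l * (c + r))"] card
    by (auto simp: S_def)
  have "F (s - c) = (\<Sum>j<m. \<gamma> j * F (s - int j + r))" for s
  proof -
    have "F (s - c) = (\<Sum>l<n. dft n F l * cyclic_char n (- int l * (s - c))) / of_nat n"
      by (rule dft_inversion[OF n per])
    also have "\<dots> = (\<Sum>l<n. \<Sum>j<m. \<gamma> j * (dft n F l * cyclic_char n (- int l * (s - int j + r))))
        / of_nat n"
    proof (intro arg_cong2[where f="(/)"] sum.cong refl)
      fix l assume l: "l \<in> {..<n}"
      have "(\<Sum>j<m. \<gamma> j * (dft n F l * cyclic_char n (- int l * (s - int j + r))))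
          = dft n F l * (\<Sum>j<m. \<gamma> j * cyclic_char n (- int l * (s - int j + r)))"
        by (simp add: sum_distrib_left mult.left_commute)
      also have "\<dots> = dft n F l * cyclic_char n (- int l * (s - c))"
      proof (cases "dft n F l = 0")
        case False
        then have "l \<in> S" using l by (simp add: S_def)
        then show ?thesis by (simp only: sum_coeffs_shifted_cyclic_char[OF \<gamma>[rule_format]])
      qed simp
      finally show "dft n F l * cyclic_char n (- int l * (s - c))
          = (\<Sum>j<m. \<gamma> j * (dft n F l * cyclic_char n (- int l * (s - int j + r))))" ..
    qed
    also have "\<dots> = (\<Sum>j<m. \<gamma> j * ((\<Sum>l<n. dft n F l * cyclic_char n (- int l * (s - int j + r)))
        / of_nat n))"
      by (subst sum.swap) (simp add: sum_distrib_left sum_divide_distrib)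
    also have "\<dots> = (\<Sum>j<m. \<gamma> j * F (s - int j + r))"
      by (simp only: dft_inversion[OF n per, symmetric])
    finally show ?thesis .
  qed
  then show thesis using that by blast
qed

section \<open>Fourier transform of functions in D_N^M\<close>

lemma sum_periodic_blocks:
  fixes h :: "nat \<Rightarrow> 'a::semiring_1"
  assumes per: "\<forall>v. h (v + n) = h v"
  shows "(\<Sum>v<q * n. h v) = of_nat q * (\<Sum>v<n. h v)"
proof -
  have hm: "h (u + m * n) = h u" for u m
    by (induction m arbitrary: u) (simp_all add: per add.assoc[symmetric])
  have inner: "sum h {m * n..<m * n + n} = (\<Sum>v<n. h v)" for m
  proof -
    have "sum h {m * n..<m * n + n} = sum h {0 + m * n..<n + m * n}" by (simp add: add.commute)
    also have "\<dots> = (\<Sum>v=0..<n. h (v + m * n))" by (rule sum.shift_bounds_nat_ivl)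
    also have "\<dots> = (\<Sum>v<n. h v)" by (simp add: hm atLeast0LessThan)
    finally show ?thesis .
  qed
  have "(\<Sum>v<q * n. h v) = (\<Sum>m<q. sum h {m * n..<m * n + n})"
    by (simp add: sum.nat_group)
  also have "\<dots> = (\<Sum>m<q. \<Sum>v<n. h v)" by (simp add: inner)
  finally show ?thesis by simp
qed

lemma pnum_mem_reps:
  assumes p1: "1 < p" and NK: "N' \<le> K" and v: "v < p ^ (K + N')"
  shows "pnum p v N' \<in> reps p K"
  unfolding reps_def
proof (intro CollectI conjI allI impI)
  show "pnum p v N' \<in> Qp p" by (rule pnum_Qp[OF p1])
  fix j assume "j < - int K \<or> int K \<le> j"
  then show "pnum p v N' j = 0"
  proof
    assume "j < - int K" then show ?thesis using NK by (simp add: pnum_def)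
  next
    assume j: "int K \<le> j"
    have "p ^ (K + N') \<le> p ^ nat (j + int N')" using j p1 by (intro power_increasing) auto
    then have "int v < int p ^ nat (j + int N')" using v by (metis of_nat_less_iff of_nat_power order_less_le_trans)
    then show ?thesis using j by (simp add: pnum_def)
  qed
qed

lemma trunc_eq_if_digits_zero_above:
  assumes "\<forall>j\<ge>K. c j = 0" "K \<le> n"
  shows "trunc p c n = trunc p c K"
proof -
  have "{j. j < n \<and> c j \<noteq> 0} = {j. j < K \<and> c j \<noteq> 0}"
  proof (rule Collect_cong)
    fix j
    show "(j < n \<and> c j \<noteq> 0) = (j < K \<and> c j \<noteq> 0)"
      using assms by (cases "j < K") auto
  qed
  then show ?thesis by (simp add: trunc_def)
qed

lemma reps_eq_pnum_if_digits_zero_below: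
  assumes p1: "1 < p" and c: "c \<in> reps p K" and low: "\<forall>j < - int N'. c j = 0"
  obtains v where "v < p ^ (K + N')" "c = pnum p v N'"
proof -
  have cQ: "c \<in> Qp p" and hi: "\<forall>j\<ge>int K. c j = 0" using c by (auto simp: reps_def)
  obtain i where i: "trunc p c (int K) = of_int i * real p powi (- int N')"
    using ppow_dvd_trunc_if_digits_zero_below[OF p1 cQ low] unfolding ppow_dvd_def by blast
  have pN: "real p powi (- int N') * real p ^ N' = 1" using p1 by (simp add: power_int_minus)
  have b: "0 \<le> trunc p c (int K)" "trunc p c (int K) < real p ^ K"
    using trunc_bounds[OF p1 cQ, of "int K"] by auto
  have "0 < real p powi (- int N')" using p1 by simp
  then have i0: "0 \<le> i" using b(1) i by (simp add: zero_le_mult_iff)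
  have "trunc p c (int K) * real p ^ N' < real p ^ K * real p ^ N'" using b p1 by simp
  then have "of_int i < real p ^ (K + N')" using i pN by (simp add: power_add mult.assoc)
  then have "of_int i < (of_int (int (p ^ (K + N'))) :: real)" by simp
  then have "int (nat i) < int (p ^ (K + N'))" using i0 by (simp only: of_int_less_iff int_nat_eq) simp
  then have "nat i < p ^ (K + N')" by (simp only: of_nat_less_iff)
  moreover have "c = pnum p (nat i) N'"
  proof (rule Qp_eqI_trunc[OF cQ pnum_Qp[OF p1] p1], rule allI)
    have vK: "real (nat i) / real p ^ N' = trunc p c (int K)"
      using i i0 p1 by (simp add: power_int_minus divide_inverse)
    fix n
    show "trunc p c n = trunc p (pnum p (nat i) N') n"
    proof (cases "n \<le> int K")
      case True
      then show ?thesis using trunc_eq_rmod[OF p1 cQ True] trunc_pnum[OF p1] vK by simp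
    next
      case False
      then have "trunc p c n = trunc p c (int K)" using trunc_eq_if_digits_zero_above[OF hi, of n] by simp
      moreover have "real p ^ K \<le> real p powi n"
        using False p1 power_int_increasing[of "int K" n "real p"] by simp
      ultimately show ?thesis using trunc_pnum[OF p1] vK b by simp
    qed
  qed
  ultimately show thesis by (rule that)
qed

lemma reps_digits_zero_below_eq:
  assumes p1: "1 < p" and NK: "N' \<le> K"
  shows "{c \<in> reps p K. \<forall>j < - int N'. c j = 0} = (\<lambda>v. pnum p v N') ` {..<p^(K+N')}"
proof
  show "{c \<in> reps p K. \<forall>j < - int N'. c j = 0} \<subseteq> (\<lambda>v. pnum p v N') ` {..<p^(K+N')}"
  proof
    fix c assume "c \<in> {c \<in> reps p K. \<forall>j < - int N'. c j = 0}"
    then obtain v where "v < p ^ (K + N')" "c = pnum p v N'"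
      using reps_eq_pnum_if_digits_zero_below[OF p1, of c K N'] by blast
    then show "c \<in> (\<lambda>v. pnum p v N') ` {..<p^(K+N')}" by blast
  qed
  have "\<forall>j < - int N'. pnum p v N' j = 0" for v by (simp add: pnum_def)
  then show "(\<lambda>v. pnum p v N') ` {..<p^(K+N')} \<subseteq> {c \<in> reps p K. \<forall>j < - int N'. c j = 0}"
    using pnum_mem_reps[OF p1 NK] by blast
qed

lemma inj_on_pnum:
  assumes p1: "1 < p"
  shows "inj_on (\<lambda>v. pnum p v N') {..<p^(K+N')}"
proof (rule inj_onI)
  fix a b assume a: "a \<in> {..<p^(K+N')}" and b: "b \<in> {..<p^(K+N')}" and e: "pnum p a N' = pnum p b N'"
  have r: "real v / real p ^ N' rmod real p powi int K = real v / real p ^ N'" if v: "v < p^(K+N')" for v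
  proof (rule rmod_idem)
    have "v < p ^ K * p ^ N'" using v by (simp add: power_add)
    then have "real v < real (p ^ K * p ^ N')" by (simp only: of_nat_less_iff)
    then have "real v < real p ^ K * real p ^ N'" by simp
    then show "real v / real p ^ N' \<in> {0..<\<bar>real p powi int K\<bar>}" using p1 by (simp add: field_simps)
  qed
  have "trunc p (pnum p a N') (int K) = trunc p (pnum p b N') (int K)" using e by simp
  then have "real a / real p ^ N' = real b / real p ^ N'" using r a b trunc_pnum[OF p1] by simp
  then show "a = b" using p1 by simp
qed

lemma finite_reps:
  assumes "1 < p"
  shows "finite (reps p K)"
proof -
  have "reps p K = {c \<in> reps p K. \<forall>j < - int K. c j = 0}" by (auto simp: reps_def)
  then show ?thesis using reps_digits_zero_below_eq[OF assms order_refl] by simp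
qed

lemma sum_reps_DNM:
  assumes p1: "1 < p" and f: "f \<in> DNM p N M" and K: "N \<le> K"
  shows "(\<Sum>c\<in>reps p K. h c * f c) = (\<Sum>v<p^(K+N). h (pnum p v N) * f (pnum p v N))"
proof -
  define R where "R = {c \<in> reps p K. \<forall>j < - int N. c j = 0}"
  have "(\<Sum>c\<in>reps p K. h c * f c) = (\<Sum>c\<in>R. h c * f c)"
  proof (rule sum.mono_neutral_right[OF finite_reps[OF p1]])
    show "\<forall>c\<in>reps p K - R. h c * f c = 0"
      using DNM_digits_zero_below[OF p1 f] by (auto simp: R_def reps_def)
  qed (auto simp: R_def)
  also have "R = (\<lambda>v. pnum p v N) ` {..<p^(K+N)}"
    unfolding R_def using K by (rule reps_digits_zero_below_eq[OF p1])
  also have "(\<Sum>c\<in>(\<lambda>v. pnum p v N) ` {..<p^(K+N)}. h c * f c)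
      = (\<Sum>v<p^(K+N). h (pnum p v N) * f (pnum p v N))"
    by (rule sum.reindex[OF inj_on_pnum[OF p1], unfolded comp_def])
  finally show ?thesis .
qed

lemma ppow_dvd_pnum_lowbd:
  assumes p1: "1 < p"
  shows "ppow_dvd p (- int (lowbd (pnum p v K))) (real v / real p ^ K)"
proof -
  have "v < 2 ^ v" by (rule less_exp)
  also have "(2::nat) ^ v \<le> p ^ v" using p1 by (intro power_mono) auto
  finally have "real v < real p ^ v" by (metis of_nat_less_iff of_nat_power)
  moreover have "real v / real p ^ K \<le> real v"
  proof -
    have pk: "1 \<le> real p ^ K" using p1 by simp
    have "real v * 1 \<le> real v * real p ^ K" by (rule mult_left_mono[OF pk]) simp
    then show ?thesis using pk by (simp add: divide_le_eq)
  qed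
  ultimately have "real v / real p ^ K < real p ^ v" by linarith
  then have "real v / real p ^ K < real p powi int v" by simp
  then have "trunc p (pnum p v K) (int v) = real v / real p ^ K"
    using trunc_pnum[OF p1, of v K "int v"] by simp
  moreover have "ppow_dvd p (- int (lowbd (pnum p v K))) (trunc p (pnum p v K) (int v))"
    using ppow_dvd_trunc_if_digits_zero_below[OF p1 pnum_Qp[OF p1] digits_zero_below_lowbd[OF pnum_Qp[OF p1]]] .
  ultimately show ?thesis by simp
qed

lemma cis_2pi_rmod_1: "cis (2 * pi * (x rmod 1)) = cis (2 * pi * x)"
proof -
  have r: "x rmod 1 = x - of_int \<lfloor>x\<rfloor>" by (simp add: rmod_def)
  have "cis (2 * pi * x) = cis (2 * pi * (x - of_int \<lfloor>x\<rfloor>) + 2 * pi * of_int \<lfloor>x\<rfloor>)"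
    by (simp add: algebra_simps)
  also have "\<dots> = cis (2 * pi * (x - of_int \<lfloor>x\<rfloor>)) * cis (2 * pi * of_int \<lfloor>x\<rfloor>)"
    by (simp only: cis_mult)
  also have "cis (2 * pi * of_int \<lfloor>x\<rfloor>) = 1" by (rule cis_multiple_2pi) simp
  finally show ?thesis using r by simp
qed

lemma rmod_1_mult_rmod:
  fixes A B P :: real
  assumes P: "0 < P" and "A * P \<in> \<int>" "B * P \<in> \<int>" "P * P \<in> \<int>"
  shows "((A rmod P) * (B rmod P)) rmod 1 = (A * B) rmod 1"
proof -
  define a where "a = \<lfloor>A / P\<rfloor>"
  define b where "b = \<lfloor>B / P\<rfloor>"
  have "(A rmod P) * (B rmod P)
      = A * B + (of_int (- a) * (B * P) + of_int (- b) * (A * P) + of_int (a * b) * (P * P))"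
    using P by (simp add: rmod_def a_def b_def algebra_simps)
  moreover have "of_int (- a) * (B * P) + of_int (- b) * (A * P) + of_int (a * b) * (P * P) \<in> \<int>"
    using assms(2-4) by (intro Ints_add Ints_mult[OF Ints_of_int])
  then obtain i where "of_int (- a) * (B * P) + of_int (- b) * (A * P) + of_int (a * b) * (P * P)
      = of_int i"
    by (elim Ints_cases) simp
  ultimately show ?thesis using rmod_add_int_mult[of "A * B" i 1] by simp
qed

lemma mult_ppow_in_Ints:
  assumes p1: "1 < p" and "ppow_dvd p (- int k) A" "k \<le> L"
  shows "A * real p ^ L \<in> \<int>"
proof -
  obtain i where "A = of_int i * real p powi (- int k)" using assms(2) unfolding ppow_dvd_def by blast
  moreover have "real p ^ L = real p ^ (L - k) * real p ^ k" using assms(3) by (simp flip: power_add)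
  ultimately have "A * real p ^ L = of_int (i * int p ^ (L - k))"
    using p1 by (simp add: power_int_minus field_simps)
  then show ?thesis by simp
qed

lemma pfrac_pmult_pnum:
  assumes p1: "1 < p"
  shows "pfrac p (pmult p (pnum p l M) (pnum p v N)) = (real l / real p ^ M * (real v / real p ^ N)) rmod 1"
proof -
  define x where "x = pnum p l M"
  define y where "y = pnum p v N"
  define L where "L = lowbd x + lowbd y"
  have xQ: "x \<in> Qp p" and yQ: "y \<in> Qp p" unfolding x_def y_def using pnum_Qp[OF p1] by auto
  have P: "real p powi int L = real p ^ L" "0 < real p ^ L" using p1 by simp_all
  have "pfrac p (pmult p x y) = (trunc p x (int L) * trunc p y (int L)) rmod 1"
    using trunc_pmult[OF p1 xQ yQ, of 0] by (simp add: pfrac_def L_def)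
  also have "\<dots> = ((real l / real p ^ M) rmod real p ^ L * ((real v / real p ^ N) rmod real p ^ L)) rmod 1"
    using trunc_pnum[OF p1] P(1) by (simp add: x_def y_def)
  also have "\<dots> = (real l / real p ^ M * (real v / real p ^ N)) rmod 1"
  proof (rule rmod_1_mult_rmod[OF P(2)])
    show "real l / real p ^ M * real p ^ L \<in> \<int>"
      using mult_ppow_in_Ints[OF p1 ppow_dvd_pnum_lowbd[OF p1]] by (simp add: L_def x_def)
    show "real v / real p ^ N * real p ^ L \<in> \<int>"
      using mult_ppow_in_Ints[OF p1 ppow_dvd_pnum_lowbd[OF p1]] by (simp add: L_def y_def)
    show "real p ^ L * real p ^ L \<in> \<int>" by (metis Ints_of_nat of_nat_mult of_nat_power)
  qed
  finally show ?thesis by (simp add: x_def y_def)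
qed

lemma pchi_pmult_pnum:
  assumes p1: "1 < p"
  shows "pchi p (pmult p (pnum p l M) (pnum p v N)) = cyclic_char (p ^ (M + N)) (int l * int v)"
  unfolding pchi_def cyclic_char_def pfrac_pmult_pnum[OF p1] cis_2pi_rmod_1 by (simp add: power_add)

lemma riemann_sum_DNM_eq_dft:
  assumes p1: "1 < p" and f: "f \<in> DNM p N M" and K: "M + N \<le> K"
  shows "(\<Sum>c\<in>reps p K. pchi p (pmult p (pnum p l M) c) * f c) * of_real (real p powi (- int K))
    = of_real (real p powi (- int M)) * dft (p ^ (M + N)) (grid_profile p N M f) l"
proof -
  define n where "n = p ^ (M + N)"
  have n0: "0 < n" using p1 by (simp add: n_def)
  define e where "e v = cyclic_char n (int l * int v) * grid_profile p N M f (int v)" for v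
  have "(\<Sum>c\<in>reps p K. pchi p (pmult p (pnum p l M) c) * f c) = (\<Sum>v<p^(K+N). e v)"
    using K by (simp add: sum_reps_DNM[OF p1 f] pchi_pmult_pnum[OF p1] DNM_pnum[OF p1 f] e_def n_def)
  also have "p^(K+N) = p^(K-M) * n" unfolding n_def using K by (simp flip: power_add)
  also have "(\<Sum>v<p^(K-M) * n. e v) = of_nat (p^(K-M)) * (\<Sum>v<n. e v)"
  proof (rule sum_periodic_blocks, rule allI)
    fix v
    have "cyclic_char n (int l * int (v + n)) = cyclic_char n (int l * int v)"
      using cyclic_char_periodic[OF n0, of "int l * int v" "int l"] by (simp add: algebra_simps)
    moreover have "grid_profile p N M f (int (v + n)) = grid_profile p N M f (int v)"
      unfolding grid_profile_def n_def by simp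
    ultimately show "e (v + n) = e v" by (simp add: e_def)
  qed
  also have "(\<Sum>v<n. e v) = dft n (grid_profile p N M f) l" by (simp add: dft_def e_def)
  finally have S: "(\<Sum>c\<in>reps p K. pchi p (pmult p (pnum p l M) c) * f c)
      = of_nat (p^(K-M)) * dft n (grid_profile p N M f) l" .
  have "real (p^(K-M)) = real p powi (int K - int M)"
    using K by (simp add: power_int_def nat_diff_distrib)
  then have "real (p^(K-M)) * real p powi (- int K) = real p powi (- int M)"
    using p1 by (simp flip: power_int_add)
  then have "complex_of_real (real (p^(K-M))) * of_real (real p powi (- int K))
      = of_real (real p powi (- int M))"
    by (metis of_real_mult)
  then show ?thesis unfolding S n_def by (simp add: algebra_simps)
qed

text \<open>For test functions the Riemann sums defining the Haar integral are eventually constant.\<close>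

lemma fourier_pnum_eq_dft:
  assumes p1: "1 < p" and f: "f \<in> DNM p N M"
  shows "fourier p f (pnum p l M)
    = of_real (real p powi (- int M)) * dft (p ^ (M + N)) (grid_profile p N M f) l"
proof -
  have "(\<lambda>K. (\<Sum>c\<in>reps p K. pchi p (pmult p (pnum p l M) c) * f c) * of_real (real p powi (- int K)))
      \<longlonglongrightarrow> of_real (real p powi (- int M)) * dft (p ^ (M + N)) (grid_profile p N M f) l"
    by (rule tendsto_eventually, rule eventually_sequentiallyI[of "M+N"])
       (rule riemann_sum_DNM_eq_dft[OF p1 f])
  then show ?thesis unfolding fourier_def pint_def by (rule limI)
qed

lemma Ip_with_fractional_part:
  assumes p1: "1 < p" and r0: "0 \<le> \<rho>" and r1: "\<rho> < 1" and \<rho>: "ppow_dvd p (- int K) \<rho>"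
  obtains a where "a \<in> Ip p" "\<forall>n\<ge>0. trunc p a n = \<rho>"
proof -
  obtain u where u: "\<rho> = of_int u * real p powi (- int K)" using \<rho> unfolding ppow_dvd_def by blast
  have "0 < real p powi (- int K)" using p1 by simp
  then have u0: "0 \<le> u" using u r0 by (simp add: zero_le_mult_iff)
  define a where "a = pnum p (nat u) K"
  have aQ: "a \<in> Qp p" unfolding a_def by (rule pnum_Qp[OF p1])
  have e: "real (nat u) / real p ^ K = \<rho>" using u u0 by (simp add: power_int_minus divide_inverse)
  have T: "\<forall>n\<ge>0. trunc p a n = \<rho>"
  proof (intro allI impI)
    fix n :: int assume "0 \<le> n"
    then have "1 \<le> real p powi n" using p1 by (simp add: power_int_def)
    then have "\<rho> \<in> {0..<\<bar>real p powi n\<bar>}" using r0 r1 by auto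
    then show "trunc p a n = \<rho>" using trunc_pnum[OF p1, of "nat u" K n] by (simp add: a_def e)
  qed
  obtain k where k: "\<forall>j<k. a j = 0" using Qp_digits_zero_below[OF aQ] by blast
  have "a j = 0" if "0 \<le> j" for j
    using trunc_add_one[OF k, of p j] T that p1 by simp
  then have "a \<in> Ip p" using aQ by (simp add: Ip_def)
  then show thesis using T that by blast
qed

lemma Ip_window:
  assumes p1: "1 < p" and \<beta>0: "0 \<le> \<beta>" and \<beta>1: "\<beta> < 1" and \<beta>: "ppow_dvd p (- int L) \<beta>"
  obtains r :: int and a :: "nat \<Rightarrow> padic" where "inj_on a {..<p ^ N}"
    and "\<And>j. j < p ^ N \<Longrightarrow> a j \<in> Ip p"
    and "\<And>j k. j < p ^ N \<Longrightarrow> 0 \<le> k \<Longrightarrow> trunc p (a j) k = \<beta> + of_int (int j - r) * real p powi (- int N)"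
proof -
  define m where "m = p ^ N"
  have m0: "0 < real m" using p1 by (simp add: m_def)
  have hm: "real p powi (- int N) = 1 / real m" by (simp add: m_def power_int_minus divide_inverse)
  define r where "r = \<lfloor>\<beta> * real m\<rfloor>"
  define \<rho> where "\<rho> j = \<beta> + of_int (int j - r) * real p powi (- int N)" for j :: nat
  have \<rho>_bounds: "0 \<le> \<rho> j \<and> \<rho> j < 1" if "j < m" for j
  proof -
    have "\<rho> j * real m = \<beta> * real m - of_int r + real j" using m0 by (simp add: \<rho>_def hm field_simps)
    moreover have "of_int r \<le> \<beta> * real m" "\<beta> * real m < of_int r + 1" unfolding r_def by linarith+
    moreover have "real j \<le> real m - 1" using that by linarith
    ultimately have "0 \<le> \<rho> j * real m" "\<rho> j * real m < 1 * real m" by linarith+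
    then show ?thesis using m0 by (simp add: zero_le_mult_iff mult_less_cancel_right)
  qed
  have \<rho>_grid: "ppow_dvd p (- int (max L N)) (\<rho> j)" for j
  proof -
    have "ppow_dvd p (- int (max L N)) \<beta>" using ppow_dvd_mono[OF p1 \<beta>] by simp
    moreover have "ppow_dvd p (- int (max L N)) (of_int (int j - r) * real p powi (- int N))"
      using ppow_dvd_mono[OF p1 ppow_dvd_int_mult[of p "- int N" "int j - r"], of "- int (max L N)"]
      by simp
    ultimately show ?thesis by (simp add: \<rho>_def ppow_dvd_add)
  qed
  have "\<exists>a. j < m \<longrightarrow> a \<in> Ip p \<and> (\<forall>k\<ge>0. trunc p a k = \<rho> j)" for j
    using Ip_with_fractional_part[OF p1 _ _ \<rho>_grid[of j]] \<rho>_bounds[of j] by blast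
  then obtain a where a: "\<And>j. j < m \<Longrightarrow> a j \<in> Ip p \<and> (\<forall>k\<ge>0. trunc p (a j) k = \<rho> j)"
    using choice[of "\<lambda>j a. j < m \<longrightarrow> a \<in> Ip p \<and> (\<forall>k\<ge>0. trunc p a k = \<rho> j)"] by blast
  have "inj_on a {..<m}"
  proof (rule inj_onI)
    fix i j assume "i \<in> {..<m}" "j \<in> {..<m}" "a i = a j"
    then have "\<rho> i = \<rho> j" using a[of i] a[of j] by force
    then show "i = j" using p1 by (simp add: \<rho>_def)
  qed
  then show thesis using that[of a r] a by (simp add: m_def \<rho>_def)
qed

lemma trunc_profile_shift_identity:
  assumes p1: "1 < p"
    and \<gamma>: "\<forall>s. grid_profile p N M f (s - c) = (\<Sum>j<m. \<gamma> j * grid_profile p N M f (s - int j + r))"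
  shows "trunc_profile p N M f (t - of_int c * real p powi (- int N))
    = (\<Sum>j<m. \<gamma> j * trunc_profile p N M f (t - of_int (int j - r) * real p powi (- int N)))"
proof (cases "ppow_dvd p (- int N) t")
  case True
  then obtain s where s: "t = of_int s * real p powi (- int N)" unfolding ppow_dvd_def by blast
  have "trunc_profile p N M f (t - of_int (int j - r) * real p powi (- int N))
      = grid_profile p N M f (s - int j + r)" for j
  proof -
    have "t - of_int (int j - r) * real p powi (- int N) = of_int (s - int j + r) * real p powi (- int N)"
      unfolding s by (simp add: algebra_simps)
    then show ?thesis by (simp only: trunc_profile_grid[OF p1])
  qed
  moreover have "trunc_profile p N M f (t - of_int c * real p powi (- int N))
      = grid_profile p N M f (s - c)"
  proof -
    have "t - of_int c * real p powi (- int N) = of_int (s - c) * real p powi (- int N)"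
      unfolding s by (simp add: algebra_simps)
    then show ?thesis by (simp only: trunc_profile_grid[OF p1])
  qed
  ultimately show ?thesis using \<gamma> by simp
next
  case False
  have "\<not> ppow_dvd p (- int N) (t - of_int d * real p powi (- int N))" for d
    using False ppow_dvd_add[OF _ ppow_dvd_int_mult[of p "- int N" d]] by force
  then have "trunc_profile p N M f (t - of_int d * real p powi (- int N)) = 0" for d
    by (rule trunc_profile_off_grid)
  then show ?thesis by (simp only: mult_zero_right sum.neutral_const)
qed

lemma card_dft_support_DNM:
  assumes p1: "1 < p" and f: "f \<in> DNM p N M" and card: "card (Lset p N M f) \<le> p ^ N"
  shows "card {l \<in> {0..<p^(M+N)}. dft (p^(M+N)) (grid_profile p N M f) l \<noteq> 0} \<le> p ^ N"
proof -
  have "Lset p N M f = {l \<in> {0..<p^(M+N)}. dft (p^(M+N)) (grid_profile p N M f) l \<noteq> 0}"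
    unfolding Lset_def fourier_pnum_eq_dft[OF p1 f] using p1 by simp
  then show ?thesis using card by simp
qed

lemma DNM_psub_combination:
  assumes p1: "1 < p" and f: "f \<in> DNM p N M" and x: "x \<in> Qp p" and b: "b \<in> Qp p"
    and a: "\<forall>j<m. a j \<in> Qp p"
    and \<gamma>: "\<forall>s. grid_profile p N M f (s - c) = (\<Sum>j<m. \<gamma> j * grid_profile p N M f (s - int j + r))"
    and bT: "trunc p b (int M) = \<beta> + of_int c * real p powi (- int N)"
    and aT: "\<forall>j<m. trunc p (a j) (int M) = \<beta> + of_int (int j - r) * real p powi (- int N)"
  shows "f (psub p x b) = (\<Sum>j<m. \<gamma> j * f (psub p x (a j)))"
proof -
  define t where "t = trunc p x (int M) - \<beta>"
  have "f (psub p x b) = trunc_profile p N M f (t - of_int c * real p powi (- int N))"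
    using DNM_psub[OF p1 f x b] by (simp add: bT t_def diff_diff_eq)
  also have "\<dots> = (\<Sum>j<m. \<gamma> j * trunc_profile p N M f (t - of_int (int j - r) * real p powi (- int N)))"
    by (rule trunc_profile_shift_identity[OF p1 \<gamma>])
  also have "\<dots> = (\<Sum>j<m. \<gamma> j * f (psub p x (a j)))"
    using DNM_psub[OF p1 f x] a aT by (intro sum.cong refl) (simp add: t_def diff_diff_eq)
  finally show ?thesis .
qed

lemma DNM_translate_in_span_of_Ip_translates:
  assumes p1: "1 < p" and f: "f \<in> DNM p N M" and card: "card (Lset p N M f) \<le> p ^ N"
    and b: "b \<in> Qp p"
  obtains a :: "nat \<Rightarrow> padic" and \<gamma> :: "nat \<Rightarrow> complex"
  where "inj_on a {..<p^N}" "a ` {..<p^N} \<subseteq> Ip p"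
    "\<forall>x\<in>Qp p. f (psub p x b) = (\<Sum>j<p^N. \<gamma> j * f (psub p x (a j)))"
proof -
  define \<beta> where "\<beta> = trunc p b 0"
  obtain bI where "trunc p b (int M) - \<beta> = of_int bI * real p powi 0"
    using ppow_dvd_trunc_diff[OF p1 b of_nat_0_le_iff] unfolding ppow_dvd_def \<beta>_def by blast
  moreover have "of_int (bI * int (p^N)) * real p powi (- int N) = of_int bI"
    using p1 by (simp add: power_int_minus)
  ultimately have bT: "trunc p b (int M) = \<beta> + of_int (bI * int (p^N)) * real p powi (- int N)"
    by (simp only: power_int_0_right mult_1_right)
  have \<beta>0: "0 \<le> \<beta>" and \<beta>1: "\<beta> < 1" using trunc_bounds[OF p1 b, of 0] by (auto simp: \<beta>_def)
  have \<beta>L: "ppow_dvd p (- int (lowbd b)) \<beta>"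
    unfolding \<beta>_def using ppow_dvd_trunc_if_digits_zero_below[OF p1 b digits_zero_below_lowbd[OF b]] .
  obtain r a where inj: "inj_on a {..<p ^ N}" and aI: "\<And>j. j < p ^ N \<Longrightarrow> a j \<in> Ip p"
    and aT: "\<And>j k. j < p ^ N \<Longrightarrow> 0 \<le> k
      \<Longrightarrow> trunc p (a j) k = \<beta> + of_int (int j - r) * real p powi (- int N)"
    using Ip_window[OF p1 \<beta>0 \<beta>1 \<beta>L, where N=N] by metis
  have n0: "0 < p ^ (M + N)" using p1 by simp
  have per: "\<forall>v. grid_profile p N M f v = grid_profile p N M f (v mod int (p ^ (M + N)))"
    by (simp add: grid_profile_def)
  obtain \<gamma> where \<gamma>: "\<forall>s. grid_profile p N M f (s - bI * int (p^N))
      = (\<Sum>j<p^N. \<gamma> j * grid_profile p N M f (s - int j + r))"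
    using shift_in_span_of_shifts[OF n0 per card_dft_support_DNM[OF p1 f card],
        where c = "bI * int (p^N)" and r = r] by blast
  have "\<forall>j<p^N. a j \<in> Qp p" using aI by (simp add: Ip_def)
  then have "\<forall>x\<in>Qp p. f (psub p x b) = (\<Sum>j<p^N. \<gamma> j * f (psub p x (a j)))"
    using DNM_psub_combination[OF p1 f _ b _ \<gamma> bT] aT by simp
  then show thesis using that inj aI by blast
qed

lemma finitely_supported_coefficients:
  fixes a :: "nat \<Rightarrow> 'a" and \<gamma> :: "nat \<Rightarrow> 'b::semiring_0"
  assumes inj: "inj_on a {..<m}" and A: "a ` {..<m} \<subseteq> A"
  obtains \<alpha> where "finite {x \<in> A. \<alpha> x \<noteq> 0}"
    and "\<forall>g. (\<Sum>x\<in>{x \<in> A. \<alpha> x \<noteq> 0}. \<alpha> x * g x) = (\<Sum>j<m. \<gamma> j * g (a j))"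
proof -
  define \<alpha> where "\<alpha> x = (if x \<in> a ` {..<m} then \<gamma> (the_inv_into {..<m} a x) else 0)" for x
  have sub: "{x \<in> A. \<alpha> x \<noteq> 0} \<subseteq> a ` {..<m}" by (auto simp: \<alpha>_def split: if_splits)
  have sum_eq: "(\<Sum>x\<in>{x \<in> A. \<alpha> x \<noteq> 0}. \<alpha> x * g x) = (\<Sum>j<m. \<gamma> j * g (a j))" for g
  proof -
    have "(\<Sum>x\<in>{x \<in> A. \<alpha> x \<noteq> 0}. \<alpha> x * g x) = (\<Sum>x\<in>a ` {..<m}. \<alpha> x * g x)"
      by (rule sum.mono_neutral_left) (use sub A in auto)
    also have "\<dots> = (\<Sum>j<m. \<alpha> (a j) * g (a j))" by (rule sum.reindex[OF inj, unfolded comp_def])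
    also have "\<dots> = (\<Sum>j<m. \<gamma> j * g (a j))" using inj by (simp add: \<alpha>_def the_inv_into_f_f)
    finally show ?thesis .
  qed
  have "finite {x \<in> A. \<alpha> x \<noteq> 0}" using sub by (rule finite_subset) simp
  then show thesis using sum_eq that by blast
qed

theorem theorem5:
  fixes p M N :: nat and \<phi> :: "padic \<Rightarrow> complex"
  assumes "prime p"
    and "\<phi> \<in> DNM p N M"
    and "card (Lset p N M \<phi>) \<le> p ^ N"
  shows "\<forall>b\<in>Qp p. \<exists>\<alpha> :: padic \<Rightarrow> complex.
           finite {a \<in> Ip p. \<alpha> a \<noteq> 0} \<and>
           (\<forall>x\<in>Qp p. \<phi> (psub p x b) = (\<Sum>a\<in>{a \<in> Ip p. \<alpha> a \<noteq> 0}. \<alpha> a * \<phi> (psub p x a)))"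
proof
  fix b assume b: "b \<in> Qp p"
  have p1: "1 < p" using assms(1) by (rule prime_gt_1_nat)
  obtain a \<gamma> where a: "inj_on a {..<p^N}" "a ` {..<p^N} \<subseteq> Ip p"
    and translate: "\<forall>x\<in>Qp p. \<phi> (psub p x b) = (\<Sum>j<p^N. \<gamma> j * \<phi> (psub p x (a j)))"
    using DNM_translate_in_span_of_Ip_translates[OF p1 assms(2,3) b] .
  obtain \<alpha> where "finite {a \<in> Ip p. \<alpha> a \<noteq> 0}"
    and "\<forall>g. (\<Sum>x\<in>{x \<in> Ip p. \<alpha> x \<noteq> 0}. \<alpha> x * g x) = (\<Sum>j<p^N. \<gamma> j * g (a j))"
    using finitely_supported_coefficients[OF a, where \<gamma>=\<gamma>] .
  then show "\<exists>\<alpha> :: padic \<Rightarrow> complex. finite {a \<in> Ip p. \<alpha> a \<noteq> 0} \<and>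
      (\<forall>x\<in>Qp p. \<phi> (psub p x b) = (\<Sum>a\<in>{a \<in> Ip p. \<alpha> a \<noteq> 0}. \<alpha> a * \<phi> (psub p x a)))"
    using translate by auto
qed

end
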